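(* Let $G$ be a group and let $A,S$ be finite nonempty subsets of $G$ with $1\in S$. Put $K=\langle S\rangle$ and let $A=\bigcup_{i\in I}A_i$ be the left $K$-decomposition of $A$ (the $A_i$ are the nonempty intersections of $A$ with left cosets $aK$). Put $W=\{i\in I: |A_iS|<|K|\}$. Then $|W|\,\kappa_1(S)\le |AS|-|A|$; equivalently, if $\kappa_1(S)>0$, $|W|\le \frac{|AS|-|A|}{\kappa_1(S)}$.
   Context: For a group $G$ and $S\subseteq G$, $\mathrm{Cay}(G,S)$ is the graph on $G$ with arcs $(x,y)$, $x^{-1}y\in S$; the image of $X$ is $XS$. For a reflexive locally finite graph $\Gamma=(V,E)$, $\partial(X)=\Gamma(X)\setminus X$; $\Gamma$ is $1$-separable if some finite nonempty $X$ has $V\setminus\Gamma(X)\ne\emptyset$; then $\kappa_1(\Gamma)=\min\{|\partial(X)|: X\text{ finite nonempty}, \Gamma(X)\ne V\}$; otherwise (and $|V|\ge1$) $\kappa_1(\Gamma)=|V|-1$ by convention. $\kappa_1(S)=\kappa_1(\mathrm{Cay}(\langle S\rangle,S))$, $\langle S\rangle$ being the subgroup generated by $S$. *)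

theory Defs
  imports "HOL-Algebra.Algebra"
begin

definition graph_boundary :: "('a \<times> 'a) set \<Rightarrow> 'a set \<Rightarrow> 'a set" where
  "graph_boundary Arc Y = Image Arc Y - Y"

definition kappa1_graph :: "'a set \<Rightarrow> ('a \<times> 'a) set \<Rightarrow> nat" where
  "kappa1_graph V Arc =
     (if \<exists>Y. finite Y \<and> Y \<noteq> {} \<and> Y \<subseteq> V \<and> Image Arc Y \<noteq> V
      then (INF Y\<in>{Y. finite Y \<and> Y \<noteq> {} \<and> Y \<subseteq> V \<and> Image Arc Y \<noteq> V}. card (graph_boundary Arc Y))
      else card V - 1)"

definition cay_arcs :: "('a, 'b) monoid_scheme \<Rightarrow> 'a set \<Rightarrow> 'a set \<Rightarrow> ('a \<times> 'a) set" where
  "cay_arcs G H S = {(x, y). x \<in> H \<and> y \<in> H \<and> inv\<^bsub>G\<^esub> x \<otimes>\<^bsub>G\<^esub> y \<in> S}"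

definition kappa1 :: "('a, 'b) monoid_scheme \<Rightarrow> 'a set \<Rightarrow> nat" where
  "kappa1 G S = kappa1_graph (generate G S) (cay_arcs G (generate G S) S)"

text \<open>Left K-decomposition of A: index set = left cosets aK meeting A; A_i = A \<inter> aK.\<close>
definition left_decomp_index :: "('a, 'b) monoid_scheme \<Rightarrow> 'a set \<Rightarrow> 'a set \<Rightarrow> 'a set set" where
  "left_decomp_index G K A = {a <#\<^bsub>G\<^esub> K | a. a \<in> carrier G \<and> A \<inter> (a <#\<^bsub>G\<^esub> K) \<noteq> {}}"

end

theory Submission
  imports Defs
begin

(*
  Let K = <S>.  The proof is a reduction to the definition of kappa1 on
  each left coset of K met by A, followed by summation over the cosets.

  (1) In Cay(K,S) the image of a vertex set T is the product set T S, so
      every finite nonempty T \<subseteq> K with T S \<noteq> K witnesses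
      kappa1(S) \<le> |T S| - |T|  (the boundary of T is T S - T).
  (2) If B lies in a left coset bK, the translate b^-1 B lies in K and has
      the same size and growth |B S| - |B|; if moreover |B S| < |K| (or K is
      infinite), it is a separating set, so kappa1(S) \<le> |B S| - |B|.
  (3) The cosets C of the left K-decomposition partition A, and since
      S \<subseteq> K the products (A \<inter> C) S stay inside C; hence both |A| and
      |A S| are the sums of the corresponding quantities over the cosets.
  The theorem follows: each coset in W contributes at least kappa1(S) to
  |A S| - |A|, and every other coset contributes a nonnegative amount.
*)


lemma kappa1_graph_le_boundary:
  assumes "finite Y" "Y \<noteq> {}" "Y \<subseteq> V" "Image Arc Y \<noteq> V"
  shows "kappa1_graph V Arc \<le> card (graph_boundary Arc Y)"
proof -
  let ?Sep = "{Y. finite Y \<and> Y \<noteq> {} \<and> Y \<subseteq> V \<and> Image Arc Y \<noteq> V}"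
  have Y: "Y \<in> ?Sep" using assms by blast
  then have "kappa1_graph V Arc = (INF Z\<in>?Sep. card (graph_boundary Arc Z))"
    unfolding kappa1_graph_def by (intro if_P) blast
  also have "\<dots> \<le> card (graph_boundary Arc Y)"
    by (rule cINF_lower[OF bdd_below_bot Y])
  finally show ?thesis .
qed

lemma finite_set_mult:
  fixes G :: "('a, 'b) monoid_scheme"
  assumes "finite Y" "finite S"
  shows "finite (set_mult G Y S)"
  using assms unfolding set_mult_def by (simp add: finite_image_set2)

lemma (in monoid) subset_set_mult_one:
  assumes "\<one> \<in> S" "Y \<subseteq> carrier G"
  shows "Y \<subseteq> Y <#> S"
  using assms unfolding set_mult_def by force

lemma (in monoid) card_le_card_set_mult:
  assumes "\<one> \<in> S" "Y \<subseteq> carrier G" "finite Y" "finite S"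
  shows "card Y \<le> card (Y <#> S)"
  using assms by (intro card_mono finite_set_mult subset_set_mult_one)

lemma (in group) card_l_coset:
  assumes "Y \<subseteq> carrier G" "x \<in> carrier G"
  shows "card (x <# Y) = card Y"
proof -
  have "x <# Y = (\<otimes>) x ` Y" unfolding l_coset_def by auto
  then show ?thesis using inj_on_g'[OF assms] by (simp add: card_image)
qed

lemma (in group) cay_arcs_Image:
  assumes K: "subgroup K G" and SK: "S \<subseteq> K" and TK: "T \<subseteq> K"
  shows "Image (cay_arcs G K S) T = T <#> S"
proof
  have KG: "K \<subseteq> carrier G" using K subgroup.subset by blast
  show "Image (cay_arcs G K S) T \<subseteq> T <#> S"
  proof
    fix y assume "y \<in> Image (cay_arcs G K S) T"
    then obtain x where x: "x \<in> T" "y \<in> K" "inv x \<otimes> y \<in> S"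
      unfolding cay_arcs_def by auto
    have "y = x \<otimes> (inv x \<otimes> y)"
      using x TK KG by (simp add: m_assoc[symmetric] subsetD)
    with x show "y \<in> T <#> S" unfolding set_mult_def by blast
  qed
  show "T <#> S \<subseteq> Image (cay_arcs G K S) T"
  proof
    fix y assume "y \<in> T <#> S"
    then obtain x s where xs: "x \<in> T" "s \<in> S" "y = x \<otimes> s"
      unfolding set_mult_def by auto
    have "x \<in> K" "s \<in> K" using xs TK SK by auto
    then have "y \<in> K" and "inv x \<otimes> y = s"
      using xs K KG by (auto simp add: subgroup.m_closed m_assoc[symmetric] subsetD)
    with xs show "y \<in> Image (cay_arcs G K S) T"
      unfolding cay_arcs_def using \<open>x \<in> K\<close> by auto
  qed
qed

lemma (in group) kappa1_le_growth:
  assumes SG: "S \<subseteq> carrier G" and one: "\<one> \<in> S"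
    and T: "finite T" "T \<noteq> {}" "T \<subseteq> generate G S"
    and proper: "T <#> S \<noteq> generate G S"
  shows "kappa1 G S \<le> card (T <#> S) - card T"
proof -
  let ?K = "generate G S"
  have K: "subgroup ?K G" by (rule generate_is_subgroup[OF SG])
  have SK: "S \<subseteq> ?K" by (auto intro: generate.incl)
  have img: "Image (cay_arcs G ?K S) T = T <#> S"
    by (rule cay_arcs_Image[OF K SK T(3)])
  have "T \<subseteq> T <#> S"
    using subset_set_mult_one[OF one] T(3) K subgroup.subset by blast
  then have "card (graph_boundary (cay_arcs G ?K S) T) = card (T <#> S) - card T"
    unfolding graph_boundary_def img
    using card_Diff_subset T(1) by blast
  then show ?thesis
    using kappa1_graph_le_boundary[OF T, of "cay_arcs G ?K S"] img proper
    unfolding kappa1_def by simp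
qed

text \<open>Step (2): the same bound for a set B inside an arbitrary left coset of
  \<langle>S\<rangle>, obtained by translating B back into \<langle>S\<rangle>.\<close>

lemma (in group) kappa1_le_growth_in_coset:
  assumes SG: "S \<subseteq> carrier G" and one: "\<one> \<in> S" and finS: "finite S"
    and b: "b \<in> carrier G" and B: "finite B" "B \<noteq> {}" "B \<subseteq> b <# generate G S"
    and small: "infinite (generate G S) \<or> card (B <#> S) < card (generate G S)"
  shows "kappa1 G S \<le> card (B <#> S) - card B"
proof -
  let ?K = "generate G S" and ?T = "inv b <# B"
  have KG: "?K \<subseteq> carrier G" using generate_is_subgroup[OF SG] subgroup.subset by blast
  have BG: "B \<subseteq> carrier G" using B(3) l_coset_subset_G[OF KG b] by blast
  have "?T \<subseteq> inv b <# (b <# ?K)" using B(3) unfolding l_coset_def by blast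
  also have "\<dots> = ?K" using KG b by (simp add: lcos_m_assoc lcos_mult_one)
  finally have TK: "?T \<subseteq> ?K" .
  have TS: "?T <#> S = inv b <# (B <#> S)"
    using BG SG b by (simp add: setmult_lcos_assoc)
  have BSG: "B <#> S \<subseteq> carrier G" using BG SG by (rule set_mult_closed)
  have card_TS: "card (?T <#> S) = card (B <#> S)"
    unfolding TS using card_l_coset[OF BSG] b by simp
  have card_T: "card ?T = card B" using card_l_coset[OF BG] b by simp
  have "finite (B <#> S)" by (rule finite_set_mult[OF B(1) finS])
  then have "finite (?T <#> S)" unfolding TS by (simp add: l_coset_def)
  then have "?T <#> S \<noteq> ?K" using small card_TS by auto
  moreover have "finite ?T" "?T \<noteq> {}" using B unfolding l_coset_def by auto
  ultimately show ?thesis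
    using kappa1_le_growth[OF SG one _ _ TK] card_TS card_T by simp
qed

lemma (in group) left_decomp_index_coset:
  assumes K: "subgroup K G" and C: "C \<in> left_decomp_index G K A" and x: "x \<in> C"
  shows "x \<in> carrier G" and "C = x <# K"
proof -
  obtain a where a: "a \<in> carrier G" "C = a <# K"
    using C unfolding left_decomp_index_def by auto
  show "x \<in> carrier G" using l_coset_carrier[OF _ a(1) K] x a(2) by simp
  show "C = x <# K" using l_repr_independence[OF _ a(1) K] x a(2) by simp
qed

lemma (in group) left_decomp_index_finite:
  assumes K: "subgroup K G" and A: "finite A"
  shows "finite (left_decomp_index G K A)"
proof -
  have "left_decomp_index G K A \<subseteq> (\<lambda>x. x <# K) ` A"
  proof
    fix C assume C: "C \<in> left_decomp_index G K A"
    then obtain x where "x \<in> A" "x \<in> C" unfolding left_decomp_index_def by auto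
    then show "C \<in> (\<lambda>x. x <# K) ` A" using left_decomp_index_coset(2)[OF K C] by auto
  qed
  then show ?thesis using A finite_surj by blast
qed

lemma (in group) card_left_decomp:
  assumes K: "subgroup K G" and SK: "S \<subseteq> K" and A: "A \<subseteq> carrier G" "finite A"
    and finS: "finite S"
  defines "I \<equiv> left_decomp_index G K A"
  shows "card A = (\<Sum>C\<in>I. card (A \<inter> C))"
    and "card (A <#> S) = (\<Sum>C\<in>I. card ((A \<inter> C) <#> S))"
proof -
  have self: "x \<in> x <# K" if "x \<in> carrier G" for x
    using that subgroup.one_closed[OF K] unfolding l_coset_def by force
  have finI: "finite I" unfolding I_def by (rule left_decomp_index_finite[OF K A(2)])
  have disj: "C \<inter> D = {}" if "C \<in> I" "D \<in> I" "C \<noteq> D" for C D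
    using that left_decomp_index_coset[OF K] unfolding I_def by blast
  have own_coset: "x <# K \<in> I" if "x \<in> A" for x
    using that A self unfolding I_def left_decomp_index_def by blast
  have stays: "(A \<inter> C) <#> S \<subseteq> C" if C: "C \<in> I" for C
  proof
    fix y assume "y \<in> (A \<inter> C) <#> S"
    then obtain a s where as: "a \<in> A \<inter> C" "s \<in> S" "y = a \<otimes> s"
      unfolding set_mult_def by auto
    then have "y \<in> a <# K" using SK unfolding l_coset_def by auto
    then show "y \<in> C" using left_decomp_index_coset(2)[OF K C[unfolded I_def]] as(1) by simp
  qed
  have "card A = card (\<Union>C\<in>I. A \<inter> C)"
    using own_coset A(1) self by (intro arg_cong[where f = card]) blast
  also have "\<dots> = (\<Sum>C\<in>I. card (A \<inter> C))"
    by (rule card_UN_disjoint[OF finI]) (use A(2) disj in auto)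
  finally show "card A = (\<Sum>C\<in>I. card (A \<inter> C))" .
  have "A <#> S \<subseteq> (\<Union>C\<in>I. (A \<inter> C) <#> S)"
  proof
    fix y assume "y \<in> A <#> S"
    then obtain a s where as: "a \<in> A" "s \<in> S" "y = a \<otimes> s"
      unfolding set_mult_def by auto
    then have "a \<in> A \<inter> (a <# K)" using A(1) self by blast
    then have "y \<in> (A \<inter> (a <# K)) <#> S"
      using as unfolding set_mult_def by blast
    then show "y \<in> (\<Union>C\<in>I. (A \<inter> C) <#> S)" using own_coset[OF as(1)] by blast
  qed
  moreover have "(\<Union>C\<in>I. (A \<inter> C) <#> S) \<subseteq> A <#> S"
    by (intro UN_least mono_set_mult) auto
  ultimately have "card (A <#> S) = card (\<Union>C\<in>I. (A \<inter> C) <#> S)" by simp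
  also have "\<dots> = (\<Sum>C\<in>I. card ((A \<inter> C) <#> S))"
  proof (rule card_UN_disjoint[OF finI])
    show "\<forall>C\<in>I. finite ((A \<inter> C) <#> S)"
      using A(2) finS by (simp add: finite_set_mult)
    show "\<forall>C\<in>I. \<forall>D\<in>I. C \<noteq> D \<longrightarrow> ((A \<inter> C) <#> S) \<inter> ((A \<inter> D) <#> S) = {}"
    proof (intro ballI impI)
      fix C D assume "C \<in> I" "D \<in> I" "C \<noteq> D"
      then have "C \<inter> D = {}" by (rule disj)
      then show "((A \<inter> C) <#> S) \<inter> ((A \<inter> D) <#> S) = {}"
        using stays[OF \<open>C \<in> I\<close>] stays[OF \<open>D \<in> I\<close>] by blast
    qed
  qed
  finally show "card (A <#> S) = (\<Sum>C\<in>I. card ((A \<inter> C) <#> S))" .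
qed

theorem mainTheorem8:
  fixes G (structure) and A S :: "'a set"
  assumes "group G"
    and "A \<subseteq> carrier G" and "finite A" and "A \<noteq> {}"
    and "S \<subseteq> carrier G" and "finite S" and "S \<noteq> {}" and "\<one> \<in> S"
  defines "K \<equiv> generate G S"
  defines "W \<equiv> {C \<in> left_decomp_index G K A.
                  infinite K \<or> card ((A \<inter> C) <#> S) < card K}"
  shows "int (card W) * int (kappa1 G S) \<le> int (card (A <#> S)) - int (card A)"
proof -
  interpret group G by fact
  have K: "subgroup K G" unfolding K_def by (rule generate_is_subgroup) fact
  have SK: "S \<subseteq> K" unfolding K_def by (auto intro: generate.incl)
  define I where "I = left_decomp_index G K A"
  define growth where "growth C = int (card ((A \<inter> C) <#> S)) - int (card (A \<inter> C))" for C
  have growth_nonneg: "0 \<le> growth C" for C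
    using card_le_card_set_mult[OF assms(8), of "A \<inter> C"] assms(2,3,6)
    unfolding growth_def by auto
  have kappa_le_growth: "int (kappa1 G S) \<le> growth C" if "C \<in> W" for C
  proof -
    from that have C: "C \<in> I" and small: "infinite K \<or> card ((A \<inter> C) <#> S) < card K"
      unfolding W_def I_def by auto
    then obtain x where x: "x \<in> A \<inter> C" unfolding I_def left_decomp_index_def by auto
    have "kappa1 G S \<le> card ((A \<inter> C) <#> S) - card (A \<inter> C)"
      using kappa1_le_growth_in_coset[OF assms(5,8,6), of x "A \<inter> C"] small assms(3) x
        left_decomp_index_coset[OF K C[unfolded I_def]] unfolding K_def by auto
    then show ?thesis using growth_nonneg[of C] unfolding growth_def by linarith
  qed
  have "int (card W) * int (kappa1 G S) = (\<Sum>C\<in>W. int (kappa1 G S))" by simp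
  also have "\<dots> \<le> (\<Sum>C\<in>W. growth C)" by (rule sum_mono) (rule kappa_le_growth)
  also have "\<dots> \<le> (\<Sum>C\<in>I. growth C)"
    using left_decomp_index_finite[OF K assms(3)] growth_nonneg
    by (intro sum_mono2) (auto simp: W_def I_def)
  also have "\<dots> = int (card (A <#> S)) - int (card A)"
    using card_left_decomp[OF K SK assms(2,3,6)]
    unfolding growth_def I_def by (simp add: sum_subtractf)
  finally show ?thesis by simp
qed

end
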